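(* Let $e_1,\dots,e_N\in\mathbb{R}^{d_e}$ satisfy $\|e_i\|_2=r$ for all $i$ and $\|e_i-e_j\|_2=f(|i-j|)\ge c|i-j|$ for a positive increasing function $f$ and an absolute constant $c>0$, and let $\Gamma\in\mathbb{R}^{N\times N}$ with $\Gamma_{ij}=\exp(-\|e_i-e_j\|_2^\nu/\ell)$, $\nu\in[1,2]$, $\ell>0$. For an integer $J$ let $\bar\Gamma_{ij}=\Gamma_{ij}\mathbf{1}\{|i-j|<J\}$ and $\Delta\Gamma=\Gamma-\bar\Gamma$. Then for any $\epsilon>0$, taking $$J=\Big\lceil\Big(\frac{\ell}{2c^\nu}\log\big(N\ell/(\epsilon^2c^\nu)\big)\Big)^{1/\nu}\Big\rceil+1$$ gives $\|\Delta\Gamma\|_{\rm F}\le\epsilon$.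
   Context: $\|\cdot\|_{\rm F}$ is the Frobenius norm. *)

theory Defs
  imports "HOL-Analysis.Analysis"
begin

definition frob_norm :: "nat \<Rightarrow> (nat \<Rightarrow> nat \<Rightarrow> real) \<Rightarrow> real" where
  "frob_norm N A = sqrt (\<Sum>i\<in>{1..N}. \<Sum>j\<in>{1..N}. (A i j)\<^sup>2)"

definition Gamma_mat :: "(nat \<Rightarrow> 'a::real_normed_vector) \<Rightarrow> real \<Rightarrow> real \<Rightarrow> nat \<Rightarrow> nat \<Rightarrow> real" where
  "Gamma_mat e \<nu> l i j = exp (- (norm (e i - e j) powr \<nu>) / l)"

definition band_trunc :: "int \<Rightarrow> (nat \<Rightarrow> nat \<Rightarrow> real) \<Rightarrow> nat \<Rightarrow> nat \<Rightarrow> real" where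
  "band_trunc J A i j = (if \<bar>int i - int j\<bar> < J then A i j else 0)"

end

theory Submission imports Defs begin

text \<open>Since \<open>\<parallel>e\<^sub>i - e\<^sub>j\<parallel> \<ge> c \<bar>i - j\<bar>\<close>, the entries outside the band satisfy
  \<open>\<Gamma>\<^sub>i\<^sub>j\<^sup>2 \<le> exp (-a \<bar>i - j\<bar>\<^sup>\<nu>)\<close> with \<open>a = 2 c\<^sup>\<nu> / l\<close>.  Superadditivity of \<open>x\<^sup>\<nu>\<close> for \<open>\<nu> \<ge> 1\<close> gives
  \<open>(t + m)\<^sup>\<nu> \<ge> t\<^sup>\<nu> + m\<close>, so beyond the bandwidth \<open>t = J - 1\<close> each row of \<open>\<Delta>\<Gamma>\<close> is
  dominated by two geometric series and has squared mass at most \<open>2 exp (-a t\<^sup>\<nu>) / a\<close>.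
  The choice of \<open>J\<close> makes \<open>exp (-a t\<^sup>\<nu>) \<le> \<epsilon>\<^sup>2 c\<^sup>\<nu> / (N l)\<close>, and summing over
  the \<open>N\<close> rows gives \<open>\<parallel>\<Delta>\<Gamma>\<parallel>\<^sub>F\<^sup>2 \<le> \<epsilon>\<^sup>2\<close>.\<close>

lemma add_powr_le_powr_add:
  fixes x y v :: real
  assumes "x \<ge> 0" "y \<ge> 0" "v \<ge> 1"
  shows "x powr v + y powr v \<le> (x + y) powr v"
proof (cases "x + y = 0")
  case True
  then have "x = 0" "y = 0" using assms by auto
  then show ?thesis by simp
next
  case False
  then have s: "x + y > 0" using assms by simp
  have frac: "z powr v \<le> (x + y) powr v * (z / (x + y))" if z: "0 \<le> z" "z \<le> x + y" for z
  proof -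
    have "(z / (x + y)) powr v \<le> (z / (x + y)) powr 1"
      using z s assms(3) by (intro powr_mono') auto
    then have "(z / (x + y)) powr v \<le> z / (x + y)" using z s by simp
    moreover have "z powr v = (x + y) powr v * (z / (x + y)) powr v"
      using z s by (simp add: powr_divide)
    ultimately show ?thesis by (metis mult_left_mono powr_ge_zero)
  qed
  have "x powr v + y powr v \<le> (x + y) powr v * (x / (x + y)) + (x + y) powr v * (y / (x + y))"
    using frac[of x] frac[of y] assms by (intro add_mono) auto
  also have "\<dots> = (x + y) powr v"
    using s by (simp add: add_divide_distrib[symmetric] distrib_left[symmetric])
  finally show ?thesis .
qed

lemma powr_add_diff_le_powr:
  fixes t k :: nat and v :: real
  assumes "t < k" "v \<ge> 1"
  shows "real t powr v + real (k - t) \<le> real k powr v"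
proof -
  have "real (k - t) = real (k - t) powr 1" using assms(1) by simp
  also have "\<dots> \<le> real (k - t) powr v" using assms by (intro powr_mono) auto
  finally have "real t powr v + real (k - t) \<le> real t powr v + real (k - t) powr v" by simp
  also have "\<dots> \<le> real k powr v"
    using add_powr_le_powr_add[of "real t" "real (k - t)" v] assms by (simp add: of_nat_diff)
  finally show ?thesis .
qed

lemma sum_power_le_geometric_tail:
  fixes q :: real and M :: "nat set"
  assumes "0 \<le> q" "q < 1" "finite M" "0 \<notin> M"
  shows "(\<Sum>m\<in>M. q ^ m) \<le> q / (1 - q)"
proof -
  have "1 + (\<Sum>m\<in>M. q ^ m) = (\<Sum>m\<in>insert 0 M. q ^ m)" using assms(3,4) by simp
  also have "\<dots> \<le> (\<Sum>m. q ^ m)"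
    using assms by (intro sum_le_suminf summable_geometric) auto
  also have "\<dots> = 1 / (1 - q)" using assms by (intro suminf_geometric) auto
  finally show ?thesis using assms(2) by (simp add: field_simps)
qed

lemma sum_exp_neg_powr_tail_le:
  fixes a v :: real and t :: nat and K :: "nat set"
  assumes "a > 0" "v \<ge> 1" "finite K" "\<And>k. k \<in> K \<Longrightarrow> t < k"
  shows "(\<Sum>k\<in>K. exp (- a * real k powr v)) \<le> exp (- a * real t powr v) / a"
proof -
  define E where "E = exp (- a * real t powr v)"
  define q where "q = exp (- a)"
  have q: "0 \<le> q" "q < 1" unfolding q_def using assms(1) by auto
  have "exp (- a * real k powr v) \<le> E * q ^ (k - t)" if "k \<in> K" for k
  proof -
    have "a * (real t powr v + real (k - t)) \<le> a * real k powr v"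
      using powr_add_diff_le_powr[OF assms(4)[OF that] assms(2)] assms(1) by (intro mult_left_mono) auto
    then have "exp (- a * real k powr v) \<le> exp (- a * real t powr v + real (k - t) * (- a))"
      by (simp add: algebra_simps)
    then show ?thesis unfolding E_def q_def by (simp only: exp_add exp_of_nat_mult)
  qed
  then have "(\<Sum>k\<in>K. exp (- a * real k powr v)) \<le> E * (\<Sum>k\<in>K. q ^ (k - t))"
    by (simp add: sum_distrib_left sum_mono)
  also have "(\<Sum>k\<in>K. q ^ (k - t)) = (\<Sum>m\<in>(\<lambda>k. k - t) ` K. q ^ m)"
    by (subst sum.reindex) (auto simp: inj_on_def dest!: assms(4))
  also have "\<dots> \<le> q / (1 - q)"
    using assms(3,4) q by (intro sum_power_le_geometric_tail) force+
  also have "q / (1 - q) = 1 / (exp a - 1)" unfolding q_def by (simp add: exp_minus field_simps)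
  also have "\<dots> \<le> 1 / a"
    using assms(1) exp_ge_add_one_self[of a] by (intro divide_left_mono) (auto simp: algebra_simps)
  finally show ?thesis unfolding E_def using assms(1) by (simp add: mult_left_mono)
qed

lemma exp_neg_powr_ceiling_le:
  fixes a v X :: real
  assumes "a > 0" "v > 0" "X > 0"
  shows "exp (- a * real (nat \<lceil>(ln X / a) powr (1 / v)\<rceil>) powr v) \<le> 1 / X"
proof -
  define t where "t = nat \<lceil>(ln X / a) powr (1 / v)\<rceil>"
  have "ln X / a \<le> real t powr v"
  proof (cases "ln X / a > 0")
    case True
    have "ln X / a = ((ln X / a) powr (1 / v)) powr v"
      using True assms(2) by (simp add: powr_powr del: powr_one')
    also have "\<dots> \<le> real t powr v" unfolding t_def using assms(2) by (intro powr_mono2) auto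
    finally show ?thesis .
  next
    case False
    then show ?thesis by (meson not_less order_trans powr_ge_zero)
  qed
  then have "ln X \<le> a * real t powr v" using assms(1) by (simp add: field_simps)
  then have "exp (- a * real t powr v) \<le> exp (- ln X)" by simp
  then show ?thesis unfolding t_def using assms(3) by (simp add: exp_minus inverse_eq_divide)
qed

lemma sum_sq_le_of_toeplitz_majorant:
  fixes A :: "nat \<Rightarrow> nat \<Rightarrow> real" and g :: "nat \<Rightarrow> real"
  assumes g_nonneg: "\<And>k. g k \<ge> 0"
    and A_le: "\<And>i j. i \<in> {1..N} \<Longrightarrow> j \<in> {1..N} \<Longrightarrow> (A i j)\<^sup>2 \<le> g (nat \<bar>int i - int j\<bar>)"
  shows "(\<Sum>i\<in>{1..N}. \<Sum>j\<in>{1..N}. (A i j)\<^sup>2) \<le> 2 * real N * (\<Sum>k<N. g k)"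
proof -
  have row: "(\<Sum>j\<in>{1..N}. g (nat \<bar>int i - int j\<bar>)) \<le> 2 * (\<Sum>k<N. g k)" if i: "i \<in> {1..N}" for i
  proof -
    define U where "U = {j \<in> {1..N}. i \<le> j}"
    define L where "L = {j \<in> {1..N}. j \<le> i}"
    let ?g = "\<lambda>j. g (nat \<bar>int i - int j\<bar>)"
    have "sum ?g {1..N} \<le> sum ?g U + sum ?g L"
    proof -
      have "{1..N} = U \<union> L" unfolding U_def L_def by auto
      then have "sum ?g {1..N} + sum ?g (U \<inter> L) = sum ?g U + sum ?g L"
        by (simp only:) (rule sum.union_inter, simp_all add: U_def L_def)
      moreover have "sum ?g (U \<inter> L) \<ge> 0" using g_nonneg by (simp add: sum_nonneg)
      ultimately show ?thesis by linarith
    qed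
    also have "sum ?g U = sum g ((\<lambda>j. j - i) ` U)"
      by (subst sum.reindex) (auto simp: inj_on_def U_def intro!: sum.cong arg_cong[where f = g])
    also have "\<dots> \<le> sum g {..<N}"
      using g_nonneg i by (intro sum_mono2) (auto simp: U_def)
    also have "sum ?g L = sum g ((\<lambda>j. i - j) ` L)"
      by (subst sum.reindex) (auto simp: inj_on_def L_def intro!: sum.cong arg_cong[where f = g])
    also have "\<dots> \<le> sum g {..<N}"
      using g_nonneg i by (intro sum_mono2) (auto simp: L_def)
    finally show ?thesis by simp
  qed
  have "(\<Sum>i\<in>{1..N}. \<Sum>j\<in>{1..N}. (A i j)\<^sup>2) \<le> (\<Sum>i\<in>{1..N}. 2 * (\<Sum>k<N. g k))"
    using A_le row by (intro sum_mono order_trans[OF _ row]) auto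
  then show ?thesis by simp
qed

lemma Gamma_mat_sq_le:
  fixes e :: "nat \<Rightarrow> 'a::real_normed_vector"
  assumes "c * k \<le> norm (e i - e j)" "c \<ge> 0" "k \<ge> 0" "\<nu> > 0" "l > 0"
  shows "(Gamma_mat e \<nu> l i j)\<^sup>2 \<le> exp (- (2 * c powr \<nu> / l) * k powr \<nu>)"
proof -
  have "c powr \<nu> * k powr \<nu> \<le> norm (e i - e j) powr \<nu>"
    using assms by (simp add: powr_mult[symmetric] powr_mono2)
  then have "(2 * c powr \<nu> / l) * k powr \<nu> \<le> 2 * norm (e i - e j) powr \<nu> / l"
    using assms(5) by (simp add: field_simps)
  then show ?thesis
    unfolding Gamma_mat_def by (simp add: power2_eq_square exp_add[symmetric])
qed

theorem lemma4:
  fixes e :: "nat \<Rightarrow> real ^ 'd" and N :: nat and r c \<nu> l \<epsilon> :: real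
    and f :: "real \<Rightarrow> real" and J :: int
  assumes norm_e: "\<And>i. i \<in> {1..N} \<Longrightarrow> norm (e i) = r"
    and f_pos: "\<And>x. x > 0 \<Longrightarrow> f x > 0"
    and f_mono: "mono_on {0..} f"
    and dist_e: "\<And>i j. i \<in> {1..N} \<Longrightarrow> j \<in> {1..N} \<Longrightarrow>
                   norm (e i - e j) = f \<bar>real i - real j\<bar>"
    and f_lower: "\<And>i j. i \<in> {1..N} \<Longrightarrow> j \<in> {1..N} \<Longrightarrow>
                   f \<bar>real i - real j\<bar> \<ge> c * \<bar>real i - real j\<bar>"
    and c_pos: "c > 0"
    and nu: "1 \<le> \<nu>" "\<nu> \<le> 2"
    and l_pos: "l > 0"
    and eps_pos: "\<epsilon> > 0"
    and J_def: "J = \<lceil>((l / (2 * c powr \<nu>)) * ln (real N * l / (\<epsilon>\<^sup>2 * c powr \<nu>))) powr (1 / \<nu>)\<rceil> + 1"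
  shows "frob_norm N (\<lambda>i j. Gamma_mat e \<nu> l i j - band_trunc J (Gamma_mat e \<nu> l) i j) \<le> \<epsilon>"
proof (cases "N = 0")
  case True
  then show ?thesis unfolding frob_norm_def using eps_pos by simp
next
  case False
  define a where "a = 2 * c powr \<nu> / l"
  define X where "X = real N * l / (\<epsilon>\<^sup>2 * c powr \<nu>)"
  define t where "t = nat \<lceil>(ln X / a) powr (1 / \<nu>)\<rceil>"
  define g where "g k = (if t < k then exp (- a * real k powr \<nu>) else 0)" for k
  have a_pos: "a > 0" and X_pos: "X > 0"
    unfolding a_def X_def using False c_pos l_pos eps_pos by auto
  have "(l / (2 * c powr \<nu>)) * ln X = ln X / a" unfolding a_def by simp
  then have J_t: "J = int t + 1"
    unfolding J_def t_def X_def[symmetric] by simp (smt (verit) powr_ge_zero)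
  define D where "D = (\<lambda>i j. Gamma_mat e \<nu> l i j - band_trunc J (Gamma_mat e \<nu> l) i j)"
  have entry_le: "(D i j)\<^sup>2 \<le> g (nat \<bar>int i - int j\<bar>)" if "i \<in> {1..N}" "j \<in> {1..N}" for i j
    using Gamma_mat_sq_le[of c "\<bar>real i - real j\<bar>" e i j \<nu> l] dist_e[OF that] f_lower[OF that]
      c_pos nu l_pos
    unfolding D_def g_def band_trunc_def J_t a_def by (auto simp: of_nat_diff)
  have "(\<Sum>k<N. g k) = (\<Sum>k\<in>{k \<in> {..<N}. t < k}. exp (- a * real k powr \<nu>))"
    unfolding g_def by (rule sum.inter_filter[symmetric]) simp
  also have "\<dots> \<le> exp (- a * real t powr \<nu>) / a"
    using a_pos nu by (intro sum_exp_neg_powr_tail_le) auto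
  also have "\<dots> \<le> 1 / X / a"
    using a_pos nu X_pos
    by (intro divide_right_mono exp_neg_powr_ceiling_le[of a \<nu> X, folded t_def]) auto
  finally have tail: "(\<Sum>k<N. g k) \<le> 1 / X / a" .
  have "(\<Sum>i\<in>{1..N}. \<Sum>j\<in>{1..N}. (D i j)\<^sup>2) \<le> 2 * real N * (\<Sum>k<N. g k)"
    by (rule sum_sq_le_of_toeplitz_majorant) (use entry_le in \<open>auto simp: g_def\<close>)
  also have "\<dots> \<le> 2 * real N * (1 / X / a)" using tail by (intro mult_left_mono) auto
  also have "\<dots> = \<epsilon>\<^sup>2" unfolding X_def a_def using False l_pos c_pos eps_pos by (simp add: field_simps)
  finally have "frob_norm N D \<le> \<epsilon>" unfolding frob_norm_def using eps_pos by (simp add: real_le_lsqrt)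
  then show ?thesis unfolding D_def .
qed

end
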